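(* Let $\mathcal{E}$ be a finite-dimensional Euclidean space, $e\in\mathcal{E}$ nonzero, $H=\{x\in\mathcal{E}:\langle e,x\rangle=1\}$, let $C\subseteq H$ be a compact convex set and $\mathcal{K}=\operatorname{cone}C$. Then for every $x\in H\setminus(-\mathcal{K}^* )$, $$\operatorname{dist}(x,C)\le\|e\|\,r\,\operatorname{dist}(x,\mathcal{K}),$$ where $r=\max_{u\in C}\|u\|$.
   Context: $\operatorname{cone}C=\{\lambda x: x\in C,\lambda\ge0\}$; $\mathcal{K}^*=\{y:\langle y,x\rangle\ge0\ \forall x\in\mathcal{K}\}$ is the dual cone. *)

theory Defs
  imports "HOL-Analysis.Analysis"
begin

definition cone_of :: "'a::real_vector set \<Rightarrow> 'a set" where
  "cone_of C = {c *\<^sub>R x | c x. c \<ge> 0 \<and> x \<in> C}"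

definition dual_cone :: "'a::real_inner set \<Rightarrow> 'a set" where
  "dual_cone K = {y. \<forall>x\<in>K. inner y x \<ge> 0}"

end

theory Submission
  imports Defs
begin

text \<open>For \<open>v \<in> C\<close> the map \<open>u \<mapsto> u - \<langle>e,u\<rangle> v\<close> is the projection along \<open>v\<close> onto the
  hyperplane \<open>e\<^sup>\<perp>\<close>; its operator norm is at most \<open>\<parallel>e\<parallel> \<parallel>v\<parallel>\<close>. Since \<open>x\<close> and \<open>v\<close> both lie in
  \<open>H\<close>, it maps \<open>x - s v\<close> to \<open>x - v\<close> for every \<open>s\<close>, whence
  \<open>dist(x, C) \<le> \<parallel>x - v\<parallel> \<le> \<parallel>e\<parallel> r \<parallel>x - s v\<parallel>\<close> for every point \<open>s v\<close> of the cone.\<close>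

lemma norm_oblique_projection_le:
  fixes e v u :: "'a::real_inner"
  assumes ev: "inner e v = 1"
  shows "norm (u - inner e u *\<^sub>R v) \<le> norm e * norm v * norm u"
proof -
  define n where "n = (norm v)\<^sup>2"
  have "v \<noteq> 0" using ev by auto
  then have n_pos: "n > 0" by (simp add: n_def)
  define d where "d = u - (inner u v / n) *\<^sub>R v"
  have d_orth: "orthogonal d v"
    using n_pos by (simp add: orthogonal_def d_def n_def inner_diff_left power2_norm_eq_inner)
  have u_eq: "u = d + (inner u v / n) *\<^sub>R v" by (simp add: d_def)
  have proj_eq: "u - inner e u *\<^sub>R v = d - inner e d *\<^sub>R v"
    using ev by (simp add: d_def inner_diff_right algebra_simps)
  define e' where "e' = e - (1 / n) *\<^sub>R v"
  have e'_orth: "orthogonal e' v"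
    using ev n_pos by (simp add: orthogonal_def e'_def n_def inner_diff_left power2_norm_eq_inner)
  have norm_e: "(norm e)\<^sup>2 = (norm e')\<^sup>2 + 1 / n"
  proof -
    have "(norm e)\<^sup>2 = (norm e')\<^sup>2 + (norm ((1 / n) *\<^sub>R v))\<^sup>2"
      using norm_add_Pythagorean[OF orthogonal_clauses(2)[OF e'_orth, of "1 / n"]]
      by (simp add: e'_def)
    then show ?thesis using n_pos by (simp add: n_def power2_eq_square)
  qed
  have "inner e' d = inner e d"
    using d_orth by (simp add: e'_def orthogonal_def inner_diff_left inner_commute[of v d])
  moreover have "\<bar>inner e' d\<bar> \<le> norm e' * norm d" by (rule Cauchy_Schwarz_ineq2)
  ultimately have cauchy_schwarz: "(inner e d)\<^sup>2 \<le> (norm e')\<^sup>2 * (norm d)\<^sup>2"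
    by (metis abs_ge_zero power2_abs power_mono power_mult_distrib)
  have "(norm (d - inner e d *\<^sub>R v))\<^sup>2 = (norm d)\<^sup>2 + (inner e d)\<^sup>2 * n"
    using norm_add_Pythagorean[OF orthogonal_clauses(2)[OF d_orth, of "- inner e d"]]
    by (simp add: n_def power_mult_distrib)
  also have "\<dots> \<le> (norm d)\<^sup>2 + (norm e')\<^sup>2 * (norm d)\<^sup>2 * n"
    using cauchy_schwarz n_pos by (intro add_left_mono mult_right_mono) auto
  also have "\<dots> = (norm e)\<^sup>2 * n * (norm d)\<^sup>2"
    using n_pos by (simp add: norm_e field_simps)
  also have "\<dots> \<le> (norm e)\<^sup>2 * n * (norm u)\<^sup>2"
    using norm_add_Pythagorean[OF orthogonal_clauses(2)[OF d_orth]] n_pos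
    by (subst u_eq) (simp add: mult_left_mono)
  also have "\<dots> = (norm e * norm v * norm u)\<^sup>2"
    by (simp add: n_def power_mult_distrib)
  finally have "(norm (d - inner e d *\<^sub>R v))\<^sup>2 \<le> (norm e * norm v * norm u)\<^sup>2" .
  then show ?thesis
    unfolding proj_eq by (rule power2_le_imp_le) simp
qed

lemma dist_le_norm_mult_dist_scaleR:
  fixes e v x :: "'a::real_inner"
  assumes ev: "inner e v = 1" and ex: "inner e x = 1"
  shows "dist x v \<le> norm e * norm v * dist x (s *\<^sub>R v)"
proof -
  have "x - v = (x - s *\<^sub>R v) - inner e (x - s *\<^sub>R v) *\<^sub>R v"
    using ev ex by (simp add: inner_diff_right algebra_simps)
  then show ?thesis
    unfolding dist_norm by (simp only: norm_oblique_projection_le[OF ev])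
qed

lemma le_mult_infdist:
  fixes x :: "'a::metric_space"
  assumes "A \<noteq> {}" and "c \<ge> 0" and "\<And>a. a \<in> A \<Longrightarrow> b \<le> c * dist x a"
  shows "b \<le> c * infdist x A"
proof (cases "c = 0")
  case True
  with assms(1,3) show ?thesis by auto
next
  case False
  with assms(2) have "c > 0" by simp
  have "b / c \<le> infdist x A"
    unfolding infdist_notempty[OF assms(1)]
    by (rule cINF_greatest[OF assms(1)])
      (use assms(3) \<open>c > 0\<close> in \<open>simp add: divide_le_eq mult.commute\<close>)
  with \<open>c > 0\<close> show ?thesis by (simp add: divide_le_eq mult.commute)
qed

theorem proposition4p2:
  fixes e :: "'a::euclidean_space" and C :: "'a set" and x :: 'a
  assumes "e \<noteq> 0"
    and "C \<subseteq> {y. inner e y = 1}"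
    and "compact C" and "convex C"
    and "inner e x = 1"
    and "x \<notin> uminus ` dual_cone (cone_of C)"
  shows "infdist x C \<le> norm e * (SUP u\<in>C. norm u) * infdist x (cone_of C)"
proof -
  define r where "r = (SUP u\<in>C. norm u)"
  have "- x \<notin> dual_cone (cone_of C)"
    using assms(6) by (metis image_eqI minus_minus)
  then have "cone_of C \<noteq> {}" by (auto simp: dual_cone_def)
  then obtain w where "w \<in> C" by (auto simp: cone_of_def)
  have norm_le_r: "norm u \<le> r" if "u \<in> C" for u
    unfolding r_def using compact_imp_bounded[OF assms(3)] that
    by (intro cSUP_upper) (auto simp: bounded_iff bdd_above_def)
  have "infdist x C \<le> norm e * r * dist x k" if "k \<in> cone_of C" for k
  proof -
    obtain s v where k: "k = s *\<^sub>R v" and "v \<in> C"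
      using \<open>k \<in> cone_of C\<close> unfolding cone_of_def by blast
    have "infdist x C \<le> dist x v" using \<open>v \<in> C\<close> by (rule infdist_le)
    also have "\<dots> \<le> norm e * norm v * dist x k"
      unfolding k using assms(2,5) \<open>v \<in> C\<close> by (intro dist_le_norm_mult_dist_scaleR) auto
    also have "\<dots> \<le> norm e * r * dist x k"
      by (intro mult_right_mono mult_left_mono norm_le_r \<open>v \<in> C\<close>) auto
    finally show ?thesis .
  qed
  moreover have "norm e * r \<ge> 0"
    using norm_le_r[OF \<open>w \<in> C\<close>] by (simp add: order_trans[OF norm_ge_zero])
  ultimately show ?thesis
    unfolding r_def[symmetric] by (intro le_mult_infdist \<open>cone_of C \<noteq> {}\<close>)
qed

end
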